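(* Let $[\mu]\in\mathbb PV_n$ be a critical point of $F_n$ with $\mathrm M_\mu=c_\mu I+D_\mu$, $c_\mu\in\mathbb R$, $D_\mu\in\mathrm{Der}(\mu)$. Then $\operatorname{tr}D_\mu=0$ if and only if $D_\mu=0$.
   Context: $V_n$ is the space of bilinear maps $\mu:\mathbb C^n\times\mathbb C^n\to\mathbb C^n$ with the standard Hermitian structures. $L^\mu_XY=\mu(X,Y)$, $R^\mu_XY=\mu(Y,X)$, and for an orthonormal basis $\{X_i\}$, $\mathrm M_\mu=2\sum_i L^\mu_{X_i}(L^\mu_{X_i})^*-2\sum_i (L^\mu_{X_i})^*L^\mu_{X_i}-2\sum_i (R^\mu_{X_i})^*R^\mu_{X_i}$ (a Hermitian matrix). $F_n([\mu])=\operatorname{tr}\mathrm M_\mu^2/\|\mu\|^4$; $[\mu]$ is a critical point of $F_n$ iff $\mathrm M_\mu=c_\mu I+D_\mu$ with $c_\mu\in\mathbb R$ and $D_\mu$ a derivation of $\mu$. *)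

theory Defs
  imports "HOL-Analysis.Analysis"
begin

text \<open>A bilinear map mu : C^n x C^n -> C^n is encoded by its values on the
standard (orthonormal) basis: (mu $ i $ j) = mu(e_i, e_j) in C^n.
Every element of V_n arises uniquely this way.\<close>

type_synonym 'n alg = "complex^'n^'n^'n"

definition mu_apply :: "'n::finite alg \<Rightarrow> complex^'n \<Rightarrow> complex^'n \<Rightarrow> complex^'n" where
  "mu_apply mu x y = (\<Sum>i\<in>UNIV. \<Sum>j\<in>UNIV. (x $ i * y $ j) *s (mu $ i $ j))"

definition adj :: "complex^'n^'m \<Rightarrow> complex^'m^'n" where
  "adj A = (\<chi> i j. cnj (A $ j $ i))"

text \<open>Matrix of L^mu_{e_i} : Y |-> mu(e_i, Y) and of R^mu_{e_i} : Y |-> mu(Y, e_i).\<close>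
definition Lmat :: "'n::finite alg \<Rightarrow> 'n \<Rightarrow> complex^'n^'n" where
  "Lmat mu i = (\<chi> k j. mu $ i $ j $ k)"

definition Rmat :: "'n::finite alg \<Rightarrow> 'n \<Rightarrow> complex^'n^'n" where
  "Rmat mu i = (\<chi> k j. mu $ j $ i $ k)"

definition Mmat :: "'n::finite alg \<Rightarrow> complex^'n^'n" where
  "Mmat mu =
     2 *\<^sub>R (\<Sum>i\<in>UNIV. Lmat mu i ** adj (Lmat mu i))
   - 2 *\<^sub>R (\<Sum>i\<in>UNIV. adj (Lmat mu i) ** Lmat mu i)
   - 2 *\<^sub>R (\<Sum>i\<in>UNIV. adj (Rmat mu i) ** Rmat mu i)"

definition is_derivation :: "'n::finite alg \<Rightarrow> complex^'n^'n \<Rightarrow> bool" where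
  "is_derivation mu D \<longleftrightarrow>
     (\<forall>x y. D *v mu_apply mu x y = mu_apply mu (D *v x) y + mu_apply mu x (D *v y))"

end

theory Submission
  imports Defs
begin

text \<open>Write L_i, R_i for left and right multiplication by the basis vector e_i. A derivation D
satisfies [D, L_i] = sum_s D_si L_s; consequently both sum_i (tr (L_i L_i^* D) - tr (L_i^* L_i D))
and sum_i tr (R_i^* R_i D) equal sum_(i,s) D_si tr (L_i^* L_s), so tr (M_mu D) = 0 for every
derivation. If M_mu = c I + D, then D is Hermitian because M_mu is, hence
0 = tr (M_mu D) = c tr D + tr (D D^*), and tr D = 0 forces the Frobenius norm tr (D D^*) of D
to vanish.\<close>

lemma mu_apply_component:
  "mu_apply mu x y $ k = (\<Sum>i\<in>UNIV. \<Sum>j\<in>UNIV. x $ i * y $ j * mu $ i $ j $ k)"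
  by (simp add: mu_apply_def)

lemma mu_apply_axis_left:
  "mu_apply mu (axis i 1) y $ k = (\<Sum>j\<in>UNIV. y $ j * mu $ i $ j $ k)"
  by (simp add: mu_apply_component mult.assoc sum_distrib_left[symmetric] axis_def
      of_bool_def[symmetric])

lemma mu_apply_axis_right:
  "mu_apply mu x (axis j 1) $ k = (\<Sum>i\<in>UNIV. x $ i * mu $ i $ j $ k)"
  by (simp add: mu_apply_component axis_def of_bool_def[symmetric]
      mult.commute[of _ "of_bool _"] mult.assoc)

lemma matrix_vector_mult_axis: "A *v axis j (1::'a::semiring_1) = (\<chi> i. A $ i $ j)"
  by (simp add: vec_eq_iff matrix_vector_mult_def axis_def of_bool_def[symmetric])

lemma mu_apply_axis: "mu_apply mu (axis i 1) (axis j 1) = mu $ i $ j"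
  unfolding vec_eq_iff mu_apply_axis_left
  by (simp add: axis_def of_bool_def[symmetric] mult.commute[of "of_bool _"])

lemma derivation_component:
  assumes "is_derivation mu D"
  shows "(\<Sum>l\<in>UNIV. D $ k $ l * mu $ i $ j $ l)
       = (\<Sum>s\<in>UNIV. D $ s $ i * mu $ s $ j $ k) + (\<Sum>t\<in>UNIV. D $ t $ j * mu $ i $ t $ k)"
proof -
  have "D *v mu_apply mu (axis i 1) (axis j 1)
      = mu_apply mu (D *v axis i 1) (axis j 1) + mu_apply mu (axis i 1) (D *v axis j 1)"
    using assms unfolding is_derivation_def by blast
  then have "(D *v mu_apply mu (axis i 1) (axis j 1)) $ k
      = mu_apply mu (D *v axis i 1) (axis j 1) $ k + mu_apply mu (axis i 1) (D *v axis j 1) $ k"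
    by simp
  then show ?thesis
    unfolding matrix_vector_mult_axis mu_apply_axis
    by (simp add: matrix_vector_mult_def mu_apply_axis_left mu_apply_axis_right)
qed

lemma derivation_commutator_Lmat_component:
  assumes "is_derivation mu D"
  shows "(D ** Lmat mu i - Lmat mu i ** D) $ k $ j = (\<Sum>s\<in>UNIV. D $ s $ i * Lmat mu s $ k $ j)"
  using derivation_component[OF assms, of k i j]
  by (simp add: Lmat_def matrix_matrix_mult_def mult.commute)

lemma trace_mult_component: "trace (A ** B) = (\<Sum>p\<in>UNIV. \<Sum>q\<in>UNIV. A $ p $ q * B $ q $ p)"
  by (simp add: trace_def matrix_matrix_mult_def)

lemma trace_mult_add_left:
  fixes A B :: "'a::comm_semiring_1^'n^'m" and C :: "'a^'m^'n"
  shows "trace ((A + B) ** C) = trace (A ** C) + trace (B ** C)"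
  by (simp add: trace_mult_component distrib_right sum.distrib)

lemma trace_mult_diff_left:
  fixes A B :: "'a::comm_ring_1^'n^'m" and C :: "'a^'m^'n"
  shows "trace ((A - B) ** C) = trace (A ** C) - trace (B ** C)"
  by (simp add: trace_mult_component left_diff_distrib sum_subtractf)

lemma trace_mult_scaleR_left:
  fixes A :: "'a::{real_algebra_1,comm_ring_1}^'n^'m"
  shows "trace ((r *\<^sub>R A) ** B) = r *\<^sub>R trace (A ** B)"
  by (simp add: trace_mult_component scaleR_sum_right)

lemma trace_mult_sum_left:
  "trace ((\<Sum>i\<in>I. f i) ** B) = (\<Sum>i\<in>I. trace (f i ** B))"
proof -
  have "trace ((\<Sum>i\<in>I. f i) ** B) = (\<Sum>p\<in>UNIV. \<Sum>q\<in>UNIV. \<Sum>i\<in>I. f i $ p $ q * B $ q $ p)"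
    by (simp add: trace_mult_component sum_component sum_distrib_right)
  also have "\<dots> = (\<Sum>p\<in>UNIV. \<Sum>i\<in>I. \<Sum>q\<in>UNIV. f i $ p $ q * B $ q $ p)"
    by (intro sum.cong refl sum.swap)
  also have "\<dots> = (\<Sum>i\<in>I. trace (f i ** B))"
    unfolding trace_mult_component by (rule sum.swap)
  finally show ?thesis .
qed

lemma matrix_diff_ldistrib:
  fixes A :: "'a::comm_ring_1^'n^'m"
  shows "A ** (B - C) = A ** B - A ** C"
  by (simp add: matrix_matrix_mult_def vec_eq_iff right_diff_distrib sum_subtractf)

lemma trace_mult_derivation_commutator_Lmat:
  assumes "is_derivation mu D"
  shows "trace (A ** (D ** Lmat mu i - Lmat mu i ** D))
       = (\<Sum>s\<in>UNIV. D $ s $ i * trace (A ** Lmat mu s))"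
proof -
  have "trace (A ** (D ** Lmat mu i - Lmat mu i ** D))
      = (\<Sum>p\<in>UNIV. \<Sum>q\<in>UNIV. \<Sum>s\<in>UNIV. D $ s $ i * (A $ p $ q * Lmat mu s $ q $ p))"
    unfolding trace_mult_component derivation_commutator_Lmat_component[OF assms]
    by (simp add: sum_distrib_left mult_ac)
  also have "\<dots> = (\<Sum>p\<in>UNIV. \<Sum>s\<in>UNIV. \<Sum>q\<in>UNIV. D $ s $ i * (A $ p $ q * Lmat mu s $ q $ p))"
    by (intro sum.cong refl sum.swap)
  also have "\<dots> = (\<Sum>s\<in>UNIV. D $ s $ i * trace (A ** Lmat mu s))"
    by (subst sum.swap) (simp add: trace_mult_component sum_distrib_left)
  finally show ?thesis .
qed

lemma trace_Lmat_adj_Lmat_mult_derivation: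
  assumes "is_derivation mu D"
  shows "trace (Lmat mu i ** adj (Lmat mu i) ** D) - trace (adj (Lmat mu i) ** Lmat mu i ** D)
       = (\<Sum>s\<in>UNIV. D $ s $ i * trace (adj (Lmat mu i) ** Lmat mu s))"
proof -
  have "trace (Lmat mu i ** adj (Lmat mu i) ** D) = trace (adj (Lmat mu i) ** D ** Lmat mu i)"
    by (metis matrix_mul_assoc trace_mul_sym)
  then show ?thesis
    by (simp add: matrix_mul_assoc[symmetric] matrix_diff_ldistrib trace_sub
        trace_mult_derivation_commutator_Lmat[OF assms, symmetric])
qed

lemma sum_adj_Rmat_mult_Rmat_component:
  "(\<Sum>i\<in>UNIV. adj (Rmat mu i) ** Rmat mu i) $ p $ q = trace (adj (Lmat mu p) ** Lmat mu q)"
  by (simp add: sum_component matrix_matrix_mult_def trace_def adj_def Lmat_def Rmat_def)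

lemma trace_Mmat_mult_derivation:
  assumes "is_derivation mu D"
  shows "trace (Mmat mu ** D) = 0"
proof -
  let ?L = "Lmat mu" and ?R = "Rmat mu"
  have "trace (Mmat mu ** D)
      = 2 *\<^sub>R (\<Sum>i\<in>UNIV. trace (?L i ** adj (?L i) ** D) - trace (adj (?L i) ** ?L i ** D))
        - 2 *\<^sub>R trace ((\<Sum>i\<in>UNIV. adj (?R i) ** ?R i) ** D)"
    by (simp only: Mmat_def trace_mult_diff_left trace_mult_scaleR_left trace_mult_sum_left
        sum_subtractf scaleR_right_diff_distrib)
  also have "\<dots> = 2 *\<^sub>R (\<Sum>i\<in>UNIV. \<Sum>s\<in>UNIV. D $ s $ i * trace (adj (?L i) ** ?L s))
        - 2 *\<^sub>R (\<Sum>p\<in>UNIV. \<Sum>q\<in>UNIV. trace (adj (?L p) ** ?L q) * D $ q $ p)"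
    unfolding trace_Lmat_adj_Lmat_mult_derivation[OF assms]
    by (simp only: trace_mult_component[where B = D] sum_adj_Rmat_mult_Rmat_component)
  finally show ?thesis
    by (simp add: mult.commute)
qed

lemma adj_Mmat: "adj (Mmat mu) = Mmat mu"
  by (simp add: vec_eq_iff adj_def Mmat_def matrix_matrix_mult_def Lmat_def Rmat_def
      scaleR_conv_of_real sum_subtractf mult.commute)

lemma trace_mult_adj_eq_0_iff:
  fixes A :: "complex^'n^'m"
  shows "trace (A ** adj A) = 0 \<longleftrightarrow> A = 0"
proof
  assume "trace (A ** adj A) = 0"
  then have "complex_of_real (\<Sum>p\<in>UNIV. \<Sum>q\<in>UNIV. (norm (A $ p $ q))\<^sup>2) = 0"
    by (simp add: trace_mult_component adj_def complex_norm_square del: of_real_power)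
  then have "(\<Sum>p\<in>UNIV. \<Sum>q\<in>UNIV. (norm (A $ p $ q))\<^sup>2) = 0"
    by (simp only: of_real_eq_0_iff)
  then show "A = 0"
    by (simp add: sum_nonneg_eq_0_iff sum_nonneg vec_eq_iff)
qed (simp add: trace_def)

theorem mainTheorem6:
  fixes mu :: "'n::finite alg" and c :: real and D :: "complex^'n^'n"
  assumes "mu \<noteq> 0"
    and M: "Mmat mu = c *\<^sub>R mat 1 + D"
    and der: "is_derivation mu D"
  shows "trace D = 0 \<longleftrightarrow> D = 0"
proof
  \<comment> \<open>The hypothesis \<open>mu \<noteq> 0\<close> only makes \<open>[mu]\<close> a projective point; the argument does not need it.\<close>
  assume "trace D = 0"
  have D: "D = Mmat mu - c *\<^sub>R mat 1"
    using M by simp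
  have "adj D = D"
    using adj_Mmat[of mu] unfolding D by (simp add: vec_eq_iff adj_def mat_def)
  have "trace (D ** adj D) = trace (Mmat mu ** D) - c *\<^sub>R trace D"
    by (simp add: M \<open>adj D = D\<close> trace_mult_add_left trace_mult_scaleR_left)
  also have "\<dots> = 0"
    by (simp add: trace_Mmat_mult_derivation[OF der] \<open>trace D = 0\<close>)
  finally show "D = 0"
    by (simp only: trace_mult_adj_eq_0_iff)
qed (simp add: trace_def)

end
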